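(* Let $\tau$ be an untwisted skew product with group component $\mathbb Z^d$, height function $h$, and base shift a transitive subshift of finite type $(\Sigma,\sigma)$. For any surjective homomorphism $L:\mathbb Z^d\to\mathbb Z$ there exists $C>0$ such that: if there are $s\in\Sigma$ and $n>0$ with $L(h(s,n))>C$, then there is a periodic point $s'$ (of some period $n'$) with $\hat L(\mathrm{rot}(s'))>0$; and if there are $s$, $n>0$ with $L(h(s,n))<-C$, then there is a point $s''$ with $\hat L(\mathrm{rot}(s''))<0$. Consequently, $0\in\mathrm{Int}(\mathrm{rot}(\tau))$ if and only if for every surjective homomorphism $L:\mathbb Z^d\to\mathbb Z$, $\sup\{L(h(s,m)):s\in\Sigma,\ m\in\mathbb N\}=\infty$.
   Context: Subshift of finite type $(\Sigma,\sigma)$: finite state set, $\{0,1\}$ transition matrix, $\Sigma$ the bi-infinite allowed sequences, $\sigma$ left shift; transitive means any state can reach any other through an allowed word. Untwisted skew product: $\tau(s,n)=(\sigma s,n+h(s))$, $h:\Sigma\to\mathbb Z^d$ depending only on $(s_0,s_1)$. $h(s,n)=\sum_{i=0}^{n-1}h(\sigma^is)$; $\mathrm{rot}(s)=\lim_{n\to\infty}h(s,n)/n$ when it exists; $\mathrm{rot}(\tau)$ the set of all rotation vectors, interior in $\mathbb R^d$. $\hat L:\mathbb R^d\to\mathbb R$ is the linear extension of $L$. *)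

theory Defs
  imports "HOL-Analysis.Analysis"
begin

text \<open>Subshift of finite type over the finite state type 'a with 0/1 transition
  matrix A (given as a boolean relation). Points are bi-infinite sequences int => 'a.\<close>

definition sft :: "('a \<Rightarrow> 'a \<Rightarrow> bool) \<Rightarrow> (int \<Rightarrow> 'a) set" where
  "sft A = {s. \<forall>i. A (s i) (s (i + 1))}"

definition shift :: "(int \<Rightarrow> 'a) \<Rightarrow> (int \<Rightarrow> 'a)" where
  "shift s = (\<lambda>i. s (i + 1))"

definition sft_transitive :: "('a \<Rightarrow> 'a \<Rightarrow> bool) \<Rightarrow> bool" where
  "sft_transitive A \<longleftrightarrow> (\<forall>a b. (a, b) \<in> {(x, y). A x y}\<^sup>+)"

definition height :: "('a \<Rightarrow> 'a \<Rightarrow> int ^ 'd) \<Rightarrow> (int \<Rightarrow> 'a) \<Rightarrow> int ^ 'd" where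
  "height H s = H (s 0) (s 1)"

definition hsum :: "('a \<Rightarrow> 'a \<Rightarrow> int ^ 'd) \<Rightarrow> (int \<Rightarrow> 'a) \<Rightarrow> nat \<Rightarrow> int ^ 'd" where
  "hsum H s n = (\<Sum>i<n. height H ((shift ^^ i) s))"

definition int_vec_to_real :: "int ^ 'd \<Rightarrow> real ^ 'd" where
  "int_vec_to_real x = (\<chi> i. real_of_int (x $ i))"

definition has_rot :: "('a \<Rightarrow> 'a \<Rightarrow> int ^ 'd) \<Rightarrow> (int \<Rightarrow> 'a) \<Rightarrow> real ^ 'd \<Rightarrow> bool" where
  "has_rot H s v \<longleftrightarrow> ((\<lambda>n. (1 / real n) *\<^sub>R int_vec_to_real (hsum H s n)) \<longlonglongrightarrow> v)"

definition rot_set :: "('a \<Rightarrow> 'a \<Rightarrow> bool) \<Rightarrow> ('a \<Rightarrow> 'a \<Rightarrow> int ^ 'd) \<Rightarrow> (real ^ 'd) set" where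
  "rot_set A H = {v. \<exists>s \<in> sft A. has_rot H s v}"

definition periodic_pt :: "(int \<Rightarrow> 'a) \<Rightarrow> nat \<Rightarrow> bool" where
  "periodic_pt s n \<longleftrightarrow> n > 0 \<and> (shift ^^ n) s = s"

definition is_surj_hom :: "(int ^ 'd \<Rightarrow> int) \<Rightarrow> bool" where
  "is_surj_hom L \<longleftrightarrow> (\<forall>x y. L (x + y) = L x + L y) \<and> surj L"

definition lin_ext :: "(int ^ 'd \<Rightarrow> int) \<Rightarrow> real ^ 'd \<Rightarrow> real" where
  "lin_ext L v = (\<Sum>i\<in>UNIV. real_of_int (L (axis i 1)) * v $ i)"

end

theory Submission
  imports Defs "HOL-Real_Asymp.Real_Asymp"
begin

(* Everything is reduced to weights of finite walks in the transition graph.  A walk that visits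
   a state twice splits into a shorter walk and a closed walk, so:
   (1) if no closed walk has positive L-weight, every Birkhoff sum of L o h is bounded by
       |states| * max|L o h|.  Hence a Birkhoff sum above C = |states| * M + 1 produces a closed
       walk of positive L-weight, whose periodic point has L^(rot) > 0; applying this to -L gives
       the negative case.  This is the first half of the theorem.
   (2) If 0 is interior to rot(tau), a rotation vector v with L^(v) > 0 exists, and along its
       orbit the L-sums grow linearly.
   (3) Conversely, if all L-sums are unbounded, then in every real direction E some closed walk
       has positive E-displacement (Dirichlet approximation turns a bad real direction into a bad
       integer homomorphism).  By transitivity these walks can be based at one state, by
       compactness of the sphere finitely many suffice uniformly, and for every small v a greedy
       concatenation of them (always choosing the loop against the accumulated error) is an orbit
       with rotation vector v.  So a ball around 0 lies in rot(tau). *)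

section \<open>Weights of finite walks\<close>

fun walk_sum :: "('a \<Rightarrow> 'a \<Rightarrow> 'b::comm_monoid_add) \<Rightarrow> 'a list \<Rightarrow> 'b" where
  "walk_sum g (x # y # zs) = g x y + walk_sum g (y # zs)"
| "walk_sum g _ = 0"

lemma walk_sum_append:
  "walk_sum g (xs @ y # ys) = walk_sum g (xs @ [y]) + walk_sum g (y # ys)"
proof (induction xs)
  case (Cons a xs)
  then show ?case by (cases xs) (auto simp: add.assoc)
qed simp

lemma walk_sum_conv_sum: "walk_sum g xs = (\<Sum>i<length xs - 1. g (xs ! i) (xs ! Suc i))"
proof (induction g xs rule: walk_sum.induct)
  case (1 g x y zs)
  then show ?case by (simp del: sum.lessThan_Suc add: sum.lessThan_Suc_shift)
qed auto

lemma walk_sum_hom: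
  assumes "\<And>x y. f (x + y) = f x + f y" and "f 0 = 0"
  shows "walk_sum (\<lambda>a b. f (g a b)) xs = f (walk_sum g xs)"
  by (induction g xs rule: walk_sum.induct) (auto simp: assms)

lemma walk_sum_le:
  fixes g :: "'a \<Rightarrow> 'a \<Rightarrow> 'b::linordered_idom"
  assumes "\<And>a b. g a b \<le> M"
  shows "walk_sum g xs \<le> of_nat (length xs - 1) * M"
  using assms
proof (induction g xs rule: walk_sum.induct)
  case (1 g x y zs)
  then have "g x y + walk_sum g (y # zs) \<le> M + of_nat (length zs) * M"
    by (intro add_mono) auto
  then show ?case by (simp add: algebra_simps)
qed auto

lemma norm_walk_sum_le:
  fixes g :: "'a \<Rightarrow> 'a \<Rightarrow> 'b::real_normed_vector"
  assumes "\<And>a b. norm (g a b) \<le> M"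
  shows "norm (walk_sum g xs) \<le> real (length xs - 1) * M"
  using assms
proof (induction g xs rule: walk_sum.induct)
  case (1 g x y zs)
  have "norm (walk_sum g (x # y # zs)) \<le> norm (g x y) + norm (walk_sum g (y # zs))"
    by (simp add: norm_triangle_ineq)
  also have "\<dots> \<le> M + real (length zs) * M"
    using 1 by (intro add_mono) auto
  finally show ?case by (simp add: algebra_simps)
qed auto

lemma norm_walk_deviation_le:
  fixes g :: "'a \<Rightarrow> 'a \<Rightarrow> 'b::real_normed_vector"
  assumes "\<And>a b. norm (g a b) \<le> M"
  shows "norm (walk_sum g xs - real (length xs - 1) *\<^sub>R v) \<le> real (length xs - 1) * (M + norm v)"
proof -
  have "norm (walk_sum g xs - real (length xs - 1) *\<^sub>R v)
      \<le> norm (walk_sum g xs) + real (length xs - 1) * norm v"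
    using norm_triangle_ineq4[of "walk_sum g xs" "real (length xs - 1) *\<^sub>R v"] by simp
  then show ?thesis using norm_walk_sum_le[of g M xs, OF assms] by (simp add: algebra_simps)
qed

lemma successively_append_Cons:
  "successively A (xs @ y # ys) \<longleftrightarrow> successively A (xs @ [y]) \<and> successively A (y # ys)"
  by (induction xs) (auto simp: successively_Cons hd_append)

definition closed_walk :: "('a \<Rightarrow> 'a \<Rightarrow> bool) \<Rightarrow> 'a list \<Rightarrow> bool" where
  "closed_walk A xs \<longleftrightarrow> length xs \<ge> 2 \<and> hd xs = last xs \<and> successively A xs"

lemma closed_walkD:
  assumes "closed_walk A xs"
  shows "xs \<noteq> []" and "length xs - 1 \<ge> 1" and "successively A xs"
    and "xs ! 0 = hd xs" and "xs ! (length xs - 1) = hd xs"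
proof -
  have len: "length xs \<ge> 2" and hd: "hd xs = last xs" and "successively A xs"
    using assms by (simp_all add: closed_walk_def)
  then show ne: "xs \<noteq> []" and "length xs - 1 \<ge> 1" and "successively A xs" by auto
  show "xs ! 0 = hd xs" using ne by (simp add: hd_conv_nth)
  show "xs ! (length xs - 1) = hd xs" using ne by (simp add: hd last_conv_nth)
qed

lemma walk_join:
  assumes "xs \<noteq> []" "ys \<noteq> []" "last xs = hd ys"
  shows "walk_sum g (xs @ tl ys) = walk_sum g xs + walk_sum g ys"
    and "successively A xs \<Longrightarrow> successively A ys \<Longrightarrow> successively A (xs @ tl ys)"
    and "hd (xs @ tl ys) = hd xs" and "last (xs @ tl ys) = last ys"
proof -
  have xs: "xs = butlast xs @ [hd ys]" and ys: "ys = hd ys # tl ys"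
    using assms by (metis append_butlast_last_id, simp)
  then have e: "xs @ tl ys = butlast xs @ hd ys # tl ys" by (metis append.assoc append_Cons append_Nil)
  show "walk_sum g (xs @ tl ys) = walk_sum g xs + walk_sum g ys"
    unfolding e by (subst walk_sum_append) (metis xs ys)
  show "successively A xs \<Longrightarrow> successively A ys \<Longrightarrow> successively A (xs @ tl ys)"
    unfolding e by (subst successively_append_Cons) (metis xs ys)
  show "hd (xs @ tl ys) = hd xs" using assms by simp
  show "last (xs @ tl ys) = last ys" using assms by (cases ys) auto
qed

section \<open>Cutting closed walks out of walks\<close>

lemma walk_cut_loop:
  assumes "successively A (as @ y # bs @ y # cs)"
  shows "closed_walk A (y # bs @ [y])" and "successively A (as @ y # cs)"
    and "walk_sum g (as @ y # bs @ y # cs) = walk_sum g (as @ y # cs) + walk_sum g (y # bs @ [y])"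
proof -
  have "successively A (as @ [y])" and "successively A ((y # bs) @ y # cs)"
    using successively_append_Cons[of A as y "bs @ y # cs"] assms by simp_all
  moreover note successively_append_Cons[of A "y # bs" y cs]
  ultimately show "closed_walk A (y # bs @ [y])" and "successively A (as @ y # cs)"
    using successively_append_Cons[of A as y cs] by (simp_all add: closed_walk_def)
  show "walk_sum g (as @ y # bs @ y # cs) = walk_sum g (as @ y # cs) + walk_sum g (y # bs @ [y])"
    using walk_sum_append[of g as y "bs @ y # cs"] walk_sum_append[of g "y # bs" y cs]
      walk_sum_append[of g as y cs] by (simp add: algebra_simps)
qed

lemma length_distinct_le_card:
  fixes xs :: "'a::finite list"
  shows "distinct xs \<Longrightarrow> length xs \<le> card (UNIV :: 'a set)"
  by (metis card_mono distinct_card finite subset_UNIV)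

text \<open>If all closed walks of length at most \<open>|states| + 1\<close> have nonpositive weight, then all do:
  a longer closed walk visits some state twice and is the sum of two shorter closed walks.\<close>
lemma closed_walk_sum_nonpos:
  fixes g :: "'a::finite \<Rightarrow> 'a \<Rightarrow> 'b::ordered_comm_monoid_add"
  assumes short: "\<And>ys. closed_walk A ys \<Longrightarrow> length ys \<le> card (UNIV :: 'a set) + 1 \<Longrightarrow> walk_sum g ys \<le> 0"
  shows "closed_walk A xs \<Longrightarrow> walk_sum g xs \<le> 0"
proof (induction "length xs" arbitrary: xs rule: less_induct)
  case less
  show ?case
  proof (cases "length xs \<le> card (UNIV :: 'a set) + 1")
    case False
    then have "\<not> distinct (butlast xs)" using length_distinct_le_card[of "butlast xs"] by auto
    then obtain as y bs cs where "butlast xs = as @ [y] @ bs @ [y] @ cs"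
      using not_distinct_decomp by blast
    moreover have "xs \<noteq> []" using closed_walkD(1)[OF less.prems] .
    ultimately have xs: "xs = as @ y # bs @ y # cs @ [last xs]"
      by (metis append.assoc append_Cons append_Nil append_butlast_last_id)
    define ws where "ws = as @ y # cs @ [last xs]"
    note cut = walk_cut_loop[of A as y bs "cs @ [last xs]", folded xs ws_def, OF closed_walkD(3)[OF less.prems]]
    have "hd ws = hd xs" unfolding ws_def by (subst (2) xs) (cases as; simp)
    then have "closed_walk A ws" using cut(2) less.prems by (simp add: closed_walk_def ws_def)
    moreover have "length xs = length as + length bs + length cs + 3" by (subst xs) simp
    ultimately have "walk_sum g ws \<le> 0" "walk_sum g (y # bs @ [y]) \<le> 0"
      using less.hyps[of ws] less.hyps[OF _ cut(1)] by (simp_all add: ws_def)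
    then show ?thesis unfolding cut(3)[of g] by (rule add_nonpos_nonpos)
  qed (use short less.prems in blast)
qed

text \<open>If no closed walk has positive weight, every walk has weight at most \<open>|states| \<cdot> M\<close>,
  where \<open>M \<ge> 0\<close> bounds the edge weights: cutting out closed walks one by one leaves a walk
  without repeated states.\<close>
lemma walk_sum_bounded:
  fixes g :: "'a::finite \<Rightarrow> 'a \<Rightarrow> 'b::linordered_idom"
  assumes cyc: "\<And>ys. closed_walk A ys \<Longrightarrow> walk_sum g ys \<le> 0"
    and M: "\<And>a b. g a b \<le> M" "0 \<le> M"
  shows "successively A xs \<Longrightarrow> walk_sum g xs \<le> of_nat (card (UNIV :: 'a set)) * M"
proof (induction "length xs" arbitrary: xs rule: less_induct)
  case less
  show ?case
  proof (cases "distinct xs")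
    case True
    then have "of_nat (length xs - 1) * M \<le> of_nat (card (UNIV :: 'a set)) * M"
      using length_distinct_le_card[of xs] M(2) by (intro mult_right_mono) auto
    then show ?thesis using walk_sum_le[of g M xs] M(1) by (meson order_trans)
  next
    case False
    then obtain as y bs cs where xs: "xs = as @ y # bs @ y # cs"
      using not_distinct_decomp by fastforce
    note cut = walk_cut_loop[of A as y bs cs, folded xs, OF less.prems]
    have "walk_sum g (as @ y # cs) \<le> of_nat (card (UNIV :: 'a set)) * M"
      using less.hyps[OF _ cut(2)] xs by simp
    from add_mono[OF this cyc[OF cut(1)]] show ?thesis unfolding cut(3)[of g] by simp
  qed
qed

section \<open>Points of the shift and their words\<close>

lemma shift_pow: "(shift ^^ i) s = (\<lambda>k. s (k + int i))"
  by (induction i) (auto simp: shift_def algebra_simps)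

lemma hsum_conv_sum: "hsum H s n = (\<Sum>i<n. H (s (int i)) (s (int i + 1)))"
  unfolding hsum_def height_def shift_pow by (simp add: add.commute)

definition orbit_word :: "(int \<Rightarrow> 'a) \<Rightarrow> nat \<Rightarrow> 'a list" where
  "orbit_word s n = map (\<lambda>i. s (int i)) [0..<Suc n]"

lemma hsum_orbit_word: "hsum H s n = walk_sum H (orbit_word s n)"
  unfolding hsum_conv_sum walk_sum_conv_sum orbit_word_def
  by (intro sum.cong) (auto simp del: upt_Suc simp: nth_append add.commute)

lemma orbit_word_walk: "s \<in> sft A \<Longrightarrow> successively A (orbit_word s n)"
  unfolding successively_conv_nth sft_def orbit_word_def
  by (auto simp del: upt_Suc simp: add.commute)

section \<open>Rotation vectors\<close>

lemma int_vec_to_real_add: "int_vec_to_real (x + y) = int_vec_to_real x + int_vec_to_real y"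
  and int_vec_to_real_zero: "int_vec_to_real 0 = 0"
  by (simp_all add: int_vec_to_real_def vec_eq_iff)

lemma int_vec_to_real_sum: "int_vec_to_real (\<Sum>i\<in>S. f i) = (\<Sum>i\<in>S. int_vec_to_real (f i))"
  using sum_comp_morphism[of int_vec_to_real f S, OF int_vec_to_real_zero int_vec_to_real_add]
  by (simp add: comp_def)

lemma tendsto_average_if_sqrt_deviation:
  fixes X :: "nat \<Rightarrow> 'b::real_normed_vector"
  assumes K: "K \<ge> 0" and dev: "\<And>n. norm (X n - real n *\<^sub>R v) \<le> sqrt (K * real n) + B"
  shows "(\<lambda>n. (1 / real n) *\<^sub>R X n) \<longlonglongrightarrow> v"
proof -
  have lim: "(\<lambda>n. sqrt K / sqrt (real n) + B / real n) \<longlonglongrightarrow> 0" by real_asymp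
  have "eventually (\<lambda>n. norm ((1 / real n) *\<^sub>R X n - v) \<le> sqrt K / sqrt (real n) + B / real n) sequentially"
    using eventually_gt_at_top[of 0]
  proof eventually_elim
    case (elim n)
    have "(1 / real n) *\<^sub>R X n - v = (1 / real n) *\<^sub>R (X n - real n *\<^sub>R v)"
      using elim by (simp add: algebra_simps)
    then have "norm ((1 / real n) *\<^sub>R X n - v) = norm (X n - real n *\<^sub>R v) / real n"
      by simp
    also have "\<dots> \<le> (sqrt (K * real n) + B) / real n"
      using dev[of n] by (intro divide_right_mono) auto
    also have "\<dots> = sqrt K / sqrt (real n) + B / real n"
    proof -
      have "sqrt (K * real n) / real n = sqrt K * (sqrt (real n) / real n)"
        by (simp add: real_sqrt_mult)
      also have "\<dots> = sqrt K / sqrt (real n)"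
        by (subst sqrt_divide_self_eq) (simp_all add: divide_inverse)
      finally have "sqrt (K * real n) / real n = sqrt K / sqrt (real n)" .
      then show ?thesis by (simp add: add_divide_distrib)
    qed
    finally show ?case .
  qed
  then show ?thesis unfolding Lim_null[of _ v] by (rule Lim_null_comparison[OF _ lim])
qed

lemma periodic_sum_deviation:
  fixes F :: "nat \<Rightarrow> 'b::real_normed_vector"
  assumes per: "\<And>i. F (i + l) = F i" and l: "l > 0"
  shows "norm ((\<Sum>i<n. F i) - real n *\<^sub>R ((1 / real l) *\<^sub>R (\<Sum>i<l. F i)))
           \<le> (\<Sum>i<l. norm (F i)) + norm (\<Sum>i<l. F i)"
proof -
  define S where "S = (\<Sum>i<l. F i)"
  have shift: "(\<Sum>i<m + l. F i) = (\<Sum>i<m. F i) + S" for m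
  proof (induction m)
    case (Suc m)
    have "(\<Sum>i<Suc m + l. F i) = (\<Sum>i<m + l. F i) + F m" using per[of m] by simp
    then show ?case using Suc.IH by (simp add: ac_simps)
  qed (simp add: S_def)
  have blocks: "(\<Sum>i<q * l + r. F i) = real q *\<^sub>R S + (\<Sum>i<r. F i)" for q r
  proof (induction q)
    case (Suc q)
    have "Suc q * l + r = (q * l + r) + l" by simp
    then show ?case using Suc.IH shift[of "q * l + r"] by (simp add: algebra_simps)
  qed simp
  define q r where "q = n div l" and "r = n mod l"
  have n: "n = q * l + r" and rl: "r < l" using l by (simp_all add: q_def r_def)
  have "real n / real l = real q + real r / real l" using l unfolding n by (simp add: field_simps)
  then have "(\<Sum>i<n. F i) - real n *\<^sub>R ((1 / real l) *\<^sub>R S) = (\<Sum>i<r. F i) - (real r / real l) *\<^sub>R S"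
    using l unfolding n blocks by (simp add: algebra_simps)
  also have "norm \<dots> \<le> norm (\<Sum>i<r. F i) + norm ((real r / real l) *\<^sub>R S)"
    by (rule norm_triangle_ineq4)
  also have "norm (\<Sum>i<r. F i) \<le> (\<Sum>i<l. norm (F i))"
    using norm_sum[of F "{..<r}"] sum_mono2[of "{..<l}" "{..<r}" "\<lambda>i. norm (F i)"] rl by force
  also have "norm ((real r / real l) *\<^sub>R S) \<le> norm S"
  proof -
    have "(real r / real l) * norm S \<le> norm S" using rl by (intro mult_left_le_one_le) auto
    then show ?thesis by simp
  qed
  finally show ?thesis unfolding S_def by simp
qed

definition periodic_extension :: "'a list \<Rightarrow> int \<Rightarrow> 'a" where
  "periodic_extension xs i = xs ! nat (i mod int (length xs - 1))"

lemma periodic_extension_nth: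
  assumes "closed_walk A xs" "j \<le> length xs - 1"
  shows "periodic_extension xs (int j) = xs ! j"
proof (cases "j < length xs - 1")
  case False
  then have "j = length xs - 1" using assms(2) by simp
  moreover have "xs ! 0 = xs ! (length xs - 1)" using closed_walkD(4,5)[OF assms(1)] by simp
  ultimately show ?thesis by (simp add: periodic_extension_def)
qed (simp add: periodic_extension_def)

lemma periodic_extension_shift:
  "periodic_extension xs (i + int (length xs - 1)) = periodic_extension xs i"
  by (simp add: periodic_extension_def)

lemma periodic_extension_in_sft:
  assumes c: "closed_walk A xs"
  shows "periodic_extension xs \<in> sft A"
  unfolding sft_def
proof (intro CollectI allI)
  fix i
  define l where "l = int (length xs - 1)"
  have l: "l > 0" using c by (simp add: closed_walk_def l_def)
  define k where "k = nat (i mod l)"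
  have k: "int k = i mod l" "k < length xs - 1" using l by (simp_all add: k_def l_def nat_less_iff)
  have "(i + 1) mod l = (int k + 1) mod l" unfolding k(1) by (rule mod_add_left_eq[symmetric])
  then have "periodic_extension xs i = periodic_extension xs (int k)"
    "periodic_extension xs (i + 1) = periodic_extension xs (int (Suc k))"
    unfolding periodic_extension_def l_def[symmetric] by (simp_all add: k(1) add.commute)
  moreover have "A (xs ! k) (xs ! Suc k)"
    using c k(2) successively_nth[of A xs k] by (simp add: closed_walk_def)
  ultimately show "A (periodic_extension xs i) (periodic_extension xs (i + 1))"
    using periodic_extension_nth[OF c, of k] periodic_extension_nth[OF c, of "Suc k"] k(2) by simp
qed

lemma periodic_extension_periodic:
  "closed_walk A xs \<Longrightarrow> periodic_pt (periodic_extension xs) (length xs - 1)"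
  unfolding periodic_pt_def shift_pow closed_walk_def
  by (intro conjI ext periodic_extension_shift) auto

lemma periodic_extension_rotation:
  assumes c: "closed_walk A xs"
  shows "has_rot H (periodic_extension xs)
           ((1 / real (length xs - 1)) *\<^sub>R int_vec_to_real (walk_sum H xs))"
proof -
  define l where "l = length xs - 1"
  have l: "l > 0" using c by (simp add: closed_walk_def l_def)
  define p where "p = periodic_extension xs"
  define F where "F i = int_vec_to_real (H (p (int i)) (p (int i + 1)))" for i
  have per: "F (i + l) = F i" for i
    using periodic_extension_shift[of xs "int i"] periodic_extension_shift[of xs "int i + 1"]
    by (simp add: F_def p_def l_def algebra_simps)
  have "(\<Sum>i<l. F i) = int_vec_to_real (walk_sum H xs)"
    unfolding walk_sum_conv_sum int_vec_to_real_sum l_def[symmetric] F_def p_def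
  proof (intro sum.cong refl)
    fix i assume "i \<in> {..<l}"
    then show "int_vec_to_real (H (periodic_extension xs (int i)) (periodic_extension xs (int i + 1)))
             = int_vec_to_real (H (xs ! i) (xs ! Suc i))"
      using periodic_extension_nth[OF c, of i] periodic_extension_nth[OF c, of "Suc i"]
      by (simp add: l_def add.commute)
  qed
  moreover have "int_vec_to_real (hsum H p n) = (\<Sum>i<n. F i)" for n
    unfolding hsum_conv_sum int_vec_to_real_sum F_def ..
  ultimately show ?thesis
    using periodic_sum_deviation[of F l, OF per l] unfolding has_rot_def p_def[symmetric] l_def[symmetric]
    by (intro tendsto_average_if_sqrt_deviation[of 0]) auto
qed

section \<open>Homomorphisms \<open>\<int>\<^sup>d \<rightarrow> \<int>\<close> and their linear extensions\<close>

text \<open>Throughout, homomorphisms are given by additivity alone.\<close>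
lemma additive_zero:
  fixes L :: "'a::monoid_add \<Rightarrow> 'b::group_add"
  assumes "\<And>x y. L (x + y) = L x + L y"
  shows "L 0 = 0"
proof -
  have "L 0 + L 0 = L 0 + 0" using assms[of 0 0] by simp
  then show ?thesis by (rule add_left_imp_eq)
qed

lemma additive_coordinates:
  fixes L :: "int ^ 'd \<Rightarrow> int"
  assumes add: "\<And>x y. L (x + y) = L x + L y"
  shows "L x = (\<Sum>i\<in>UNIV. x $ i * L (axis i 1))"
proof -
  have zero: "L 0 = 0" by (rule additive_zero[OF add])
  have axis: "L (axis i k) = k * L (axis i 1)" for i k
  proof (induction k rule: int_induct[where k = 0])
    case base
    then show ?case using zero by (simp add: axis_def zero_vec_def)
  next
    case (step1 j)
    have "axis i (j + 1) = axis i j + axis i 1" by (simp add: axis_def vec_eq_iff)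
    then show ?case using step1 add by (simp add: algebra_simps)
  next
    case (step2 j)
    have "axis i j = axis i (j - 1) + axis i 1" by (simp add: axis_def vec_eq_iff)
    then show ?case using step2 add[of "axis i (j - 1)" "axis i 1"] by (simp add: algebra_simps)
  qed
  have "(\<Sum>i\<in>UNIV. axis i (x $ i)) $ j = x $ j" for j
    unfolding sum_component axis_def by (simp add: sum.delta')
  then have "x = (\<Sum>i\<in>UNIV. axis i (x $ i))" by (simp add: vec_eq_iff)
  then have "L x = (\<Sum>i\<in>UNIV. L (axis i (x $ i)))"
    using sum_comp_morphism[of L "\<lambda>i. axis i (x $ i)" UNIV, OF zero add] by (simp add: comp_def)
  also have "\<dots> = (\<Sum>i\<in>UNIV. x $ i * L (axis i 1))" by (rule sum.cong[OF refl axis])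
  finally show ?thesis .
qed

lemma lin_ext_int_vec_to_real:
  fixes L :: "int ^ 'd \<Rightarrow> int"
  assumes "\<And>x y. L (x + y) = L x + L y"
  shows "lin_ext L (int_vec_to_real x) = real_of_int (L x)"
  unfolding lin_ext_def int_vec_to_real_def additive_coordinates[OF assms, of x]
  by (simp add: mult.commute)

lemma lin_ext_scaleR: "lin_ext L (c *\<^sub>R v) = c * lin_ext L v"
  unfolding lin_ext_def by (simp add: sum_distrib_left algebra_simps)

lemma lin_ext_uminus: "lin_ext (\<lambda>x. - L x) v = - lin_ext L v"
  unfolding lin_ext_def by (simp add: sum_negf)

lemma lin_ext_inner: "lin_ext L v = (\<chi> i. real_of_int (L (axis i 1))) \<bullet> v"
  unfolding lin_ext_def inner_vec_def by simp

lemma surj_hom_gradient_nonzero: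
  assumes "is_surj_hom L"
  shows "(\<chi> i. real_of_int (L (axis i 1))) \<noteq> 0"
proof
  assume "(\<chi> i. real_of_int (L (axis i 1))) = 0"
  then have "L (axis i 1) = 0" for i by (simp add: vec_eq_iff)
  moreover obtain x where "L x = 1" using assms by (metis is_surj_hom_def surjD)
  ultimately show False using additive_coordinates[of L x] assms by (simp add: is_surj_hom_def)
qed

section \<open>Large Birkhoff sums force rotation vectors of the same sign\<close>

lemma finite_weight_bound:
  fixes g :: "'a::finite \<Rightarrow> 'a \<Rightarrow> 'b::linordered_idom"
  shows "\<exists>M. \<forall>a b. \<bar>g a b\<bar> \<le> M"
proof (intro exI allI)
  fix a b
  have "\<bar>g a b\<bar> \<le> (\<Sum>b\<in>UNIV. \<bar>g a b\<bar>)" by (rule member_le_sum) auto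
  also have "\<dots> \<le> (\<Sum>a\<in>UNIV. \<Sum>b\<in>UNIV. \<bar>g a b\<bar>)" by (rule member_le_sum) (auto intro: sum_nonneg)
  finally show "\<bar>g a b\<bar> \<le> (\<Sum>a\<in>UNIV. \<Sum>b\<in>UNIV. \<bar>g a b\<bar>)" .
qed

lemma hom_hsum:
  fixes L :: "int ^ 'd \<Rightarrow> int"
  assumes "\<And>x y. L (x + y) = L x + L y"
  shows "L (hsum H s n) = walk_sum (\<lambda>a b. L (H a b)) (orbit_word s n)"
  unfolding hsum_orbit_word using walk_sum_hom[of L H] additive_zero[of L] assms by metis

lemma closed_walk_rotation:
  fixes L :: "int ^ 'd \<Rightarrow> int"
  assumes add: "\<And>x y. L (x + y) = L x + L y" and c: "closed_walk A xs"
  shows "\<exists>v. has_rot H (periodic_extension xs) v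
             \<and> lin_ext L v = real_of_int (walk_sum (\<lambda>a b. L (H a b)) xs) / real (length xs - 1)"
proof -
  have "walk_sum (\<lambda>a b. L (H a b)) xs = L (walk_sum H xs)"
    using walk_sum_hom[of L H xs] additive_zero[of L] add by blast
  then have "lin_ext L ((1 / real (length xs - 1)) *\<^sub>R int_vec_to_real (walk_sum H xs))
      = real_of_int (walk_sum (\<lambda>a b. L (H a b)) xs) / real (length xs - 1)"
    by (simp add: lin_ext_scaleR lin_ext_int_vec_to_real[OF add])
  then show ?thesis using periodic_extension_rotation[OF c, of H] by blast
qed

lemma positive_closed_walk_of_large_sum:
  fixes A :: "'a::finite \<Rightarrow> 'a \<Rightarrow> bool" and L :: "int ^ 'd \<Rightarrow> int"
  assumes add: "\<And>x y. L (x + y) = L x + L y" and M: "\<And>a b. \<bar>L (H a b)\<bar> \<le> M"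
    and s: "s \<in> sft A" and big: "L (hsum H s n) > int (card (UNIV :: 'a set)) * M"
  shows "\<exists>xs. closed_walk A xs \<and> walk_sum (\<lambda>a b. L (H a b)) xs > 0"
proof (rule ccontr)
  assume "\<not> ?thesis"
  then have cyc: "walk_sum (\<lambda>a b. L (H a b)) ys \<le> 0" if "closed_walk A ys" for ys
    using that by force
  have "L (H a b) \<le> M" for a b using M[of a b] by (rule abs_le_D1)
  moreover have "0 \<le> M" using M abs_ge_zero order_trans by blast
  ultimately have "walk_sum (\<lambda>a b. L (H a b)) (orbit_word s n) \<le> int (card (UNIV :: 'a set)) * M"
    using walk_sum_bounded[OF cyc] orbit_word_walk[OF s] by blast
  then show False using big unfolding hom_hsum[OF add] by simp
qed

lemma positive_rotation_of_large_sum: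
  fixes A :: "'a::finite \<Rightarrow> 'a \<Rightarrow> bool" and L :: "int ^ 'd \<Rightarrow> int"
  assumes add: "\<And>x y. L (x + y) = L x + L y" and M: "\<And>a b. \<bar>L (H a b)\<bar> \<le> M"
    and s: "s \<in> sft A" and big: "L (hsum H s n) > int (card (UNIV :: 'a set)) * M"
  shows "\<exists>xs. closed_walk A xs \<and> (\<exists>v. has_rot H (periodic_extension xs) v \<and> lin_ext L v > 0)"
proof -
  obtain xs where c: "closed_walk A xs" and pos: "walk_sum (\<lambda>a b. L (H a b)) xs > 0"
    using positive_closed_walk_of_large_sum[OF add M s big] by blast
  moreover have "length xs - 1 > 0" using c by (simp add: closed_walk_def)
  ultimately show ?thesis using closed_walk_rotation[OF add c, of H] by force
qed

text \<open>The first half of the theorem holds for every additive \<open>L\<close>, with \<open>C = |states| \<cdot> M + 1\<close>;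
  the negative case is the positive case for \<open>-L\<close>.\<close>
lemma rotation_sign_of_large_sums:
  fixes A :: "'a::finite \<Rightarrow> 'a \<Rightarrow> bool" and H :: "'a \<Rightarrow> 'a \<Rightarrow> int ^ 'd"
    and L :: "int ^ 'd \<Rightarrow> int"
  assumes add: "\<And>x y. L (x + y) = L x + L y"
  shows "\<exists>C :: real. C > 0 \<and>
           ((\<exists>s \<in> sft A. \<exists>n > 0. real_of_int (L (hsum H s n)) > C) \<longrightarrow>
              (\<exists>s' \<in> sft A. \<exists>n'. periodic_pt s' n' \<and> (\<exists>v. has_rot H s' v \<and> lin_ext L v > 0))) \<and>
           ((\<exists>s \<in> sft A. \<exists>n > 0. real_of_int (L (hsum H s n)) < - C) \<longrightarrow>
              (\<exists>s'' \<in> sft A. \<exists>v. has_rot H s'' v \<and> lin_ext L v < 0))"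
proof -
  obtain M where M: "\<And>a b. \<bar>L (H a b)\<bar> \<le> M" using finite_weight_bound[of "\<lambda>a b. L (H a b)"] by blast
  have M0: "0 \<le> M" using M abs_ge_zero order_trans by blast
  define K where "K = int (card (UNIV :: 'a set)) * M"
  have pos: "\<exists>s' \<in> sft A. \<exists>n'. periodic_pt s' n' \<and> (\<exists>v. has_rot H s' v \<and> lin_ext L v > 0)"
    if s: "s \<in> sft A" and big: "real_of_int (L (hsum H s n)) > real_of_int (K + 1)" for s n
  proof -
    have "L (hsum H s n) > int (card (UNIV :: 'a set)) * M"
      using big unfolding K_def of_int_less_iff by linarith
    then obtain xs v where c: "closed_walk A xs"
        and v: "has_rot H (periodic_extension xs) v" "lin_ext L v > 0"
      using positive_rotation_of_large_sum[where H = H, OF add M s] by blast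
    then show ?thesis using periodic_extension_in_sft[OF c] periodic_extension_periodic[OF c] by blast
  qed
  have neg: "\<exists>s'' \<in> sft A. \<exists>v. has_rot H s'' v \<and> lin_ext L v < 0"
    if s: "s \<in> sft A" and big: "real_of_int (L (hsum H s n)) < - real_of_int (K + 1)" for s n
  proof -
    have add': "- L (x + y) = - L x + - L y" for x y using add[of x y] by simp
    have M': "\<bar>- L (H a b)\<bar> \<le> M" for a b using M[of a b] by simp
    have "- L (hsum H s n) > int (card (UNIV :: 'a set)) * M"
      using big unfolding K_def by linarith
    then obtain xs v where c: "closed_walk A xs"
        and v: "has_rot H (periodic_extension xs) v" "lin_ext (\<lambda>x. - L x) v > 0"
      using positive_rotation_of_large_sum[where H = H and L = "\<lambda>x. - L x", OF add' M' s] by blast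
    then show ?thesis using periodic_extension_in_sft[OF c] lin_ext_uminus[of L v] by auto
  qed
  have "real_of_int (K + 1) > 0" using M0 by (simp add: K_def add_nonneg_pos)
  with pos neg show ?thesis by blast
qed

section \<open>Interior rotation vectors force unbounded Birkhoff sums\<close>

lemma unbounded_of_positive_rotation:
  fixes L :: "int ^ 'd \<Rightarrow> int"
  assumes add: "\<And>x y. L (x + y) = L x + L y" and rot: "has_rot H s v" and pos: "lin_ext L v > 0"
  shows "\<exists>m. L (hsum H s m) > B"
proof -
  define w where "w = (\<chi> i. real_of_int (L (axis i 1)))"
  define avg where "avg n = (1 / real n) * real_of_int (L (hsum H s n))" for n
  have avg: "avg = (\<lambda>n. w \<bullet> ((1 / real n) *\<^sub>R int_vec_to_real (hsum H s n)))"
    by (rule ext) (simp only: avg_def w_def lin_ext_inner[symmetric] lin_ext_scaleR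
        lin_ext_int_vec_to_real[OF add])
  have "avg \<longlonglongrightarrow> w \<bullet> v"
    using rot unfolding avg has_rot_def by (intro tendsto_inner tendsto_const)
  then have "avg \<longlonglongrightarrow> lin_ext L v" by (simp only: lin_ext_inner w_def)
  then have "filterlim (\<lambda>n. avg n * real n) at_top sequentially"
    using pos filterlim_real_sequentially by (rule filterlim_tendsto_pos_mult_at_top)
  then have "eventually (\<lambda>n. real_of_int B < avg n * real n) sequentially"
    by (simp add: filterlim_at_top_dense)
  then obtain N where N: "\<And>n. n \<ge> N \<Longrightarrow> real_of_int B < avg n * real n"
    unfolding eventually_sequentially by blast
  have "real_of_int B < real_of_int (L (hsum H s (Suc N)))"
    using N[of "Suc N"] by (simp add: avg_def)
  then show ?thesis by (intro exI[of _ "Suc N"]) simp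
qed

text \<open>If \<open>0\<close> is interior to the rotation set, it contains a small positive multiple of the gradient
  of \<open>L\<close>, on which \<open>lin_ext L\<close> is positive.\<close>
lemma unbounded_of_zero_in_interior:
  fixes L :: "int ^ 'd \<Rightarrow> int"
  assumes int: "(0::real ^ 'd) \<in> interior (rot_set A H)" and L: "is_surj_hom L"
  shows "\<exists>s\<in>sft A. \<exists>m. L (hsum H s m) > B"
proof -
  obtain e where e: "e > 0" "ball 0 e \<subseteq> rot_set A H" using int unfolding mem_interior by blast
  define w where "w = (\<chi> i. real_of_int (L (axis i 1)))"
  have w: "norm w > 0" using surj_hom_gradient_nonzero[OF L] by (simp add: w_def)
  define v where "v = (e / 2 / norm w) *\<^sub>R w"
  have "v \<in> ball 0 e" using w e(1) by (simp add: v_def)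
  then obtain s where s: "s \<in> sft A" "has_rot H s v" using e(2) unfolding rot_set_def by blast
  have "lin_ext L v = e / 2 * norm w"
    using w by (simp add: lin_ext_inner v_def w_def[symmetric] dot_square_norm power2_eq_square)
  moreover have "e / 2 * norm w > 0" using w e(1) by simp
  ultimately have "lin_ext L v > 0" by linarith
  moreover have "\<And>x y. L (x + y) = L x + L y" using L by (simp add: is_surj_hom_def)
  ultimately obtain m where "L (hsum H s m) > B"
    using unbounded_of_positive_rotation[of L H s v B] s(2) by blast
  then show ?thesis using s(1) by blast
qed

section \<open>Unbounded sums in all directions give closed walks in all directions\<close>

lemma simultaneous_approximation:
  fixes E :: "real ^ 'd"
  assumes "\<epsilon> > 0"
  shows "\<exists>(q::int) (p::int ^ 'd). q > 0 \<and> (\<forall>i. \<bar>of_int q * E $ i - of_int (p $ i)\<bar> < \<epsilon>)"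
proof -
  obtain n :: nat where "inverse (real (Suc n)) < \<epsilon>" using reals_Archimedean[OF assms] by blast
  then obtain N :: nat where N: "N > 0" "1 / real N < \<epsilon>" by (intro that[of "Suc n"]) (auto simp: field_simps)
  obtain h where h: "bij_betw h {0..<CARD('d)} (UNIV :: 'd set)"
    using ex_bij_betw_nat_finite[of "UNIV :: 'd set"] by auto
  define \<theta> where "\<theta> k = E $ h k" for k
  obtain q p where q: "0 < q"
    and qp: "\<And>k. k < CARD('d) \<Longrightarrow> \<bar>of_int q * \<theta> k - of_int (p k)\<bar> < 1 / real N"
    using Dirichlet_approx_simult[where \<theta> = \<theta> and N = N and n = "CARD('d)"] N(1) by blast
  define k where "k i = inv_into {0..<CARD('d)} h i" for i
  have "k i < CARD('d)" "h (k i) = i" for i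
    using h inv_into_into[of i h "{0..<CARD('d)}"] bij_betw_inv_into_right[OF h]
    by (auto simp: k_def bij_betw_def)
  then have "\<bar>of_int q * E $ i - of_int ((\<chi> i. p (k i)) $ i)\<bar> < \<epsilon>" for i
    using qp[of "k i"] N(2) by (simp add: \<theta>_def)
  then show ?thesis using q by blast
qed

lemma dot_approximation:
  fixes E :: "real ^ 'd" and p x :: "int ^ 'd"
  assumes app: "\<And>i. \<bar>of_int q * E $ i - of_int (p $ i)\<bar> < \<epsilon>"
  shows "\<bar>real_of_int (\<Sum>i\<in>UNIV. p $ i * x $ i) - of_int q * (E \<bullet> int_vec_to_real x)\<bar>
           \<le> \<epsilon> * (\<Sum>i\<in>UNIV. \<bar>real_of_int (x $ i)\<bar>)"
proof -
  have "real_of_int (\<Sum>i\<in>UNIV. p $ i * x $ i) - of_int q * (E \<bullet> int_vec_to_real x)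
      = - (\<Sum>i\<in>UNIV. (of_int q * E $ i - of_int (p $ i)) * real_of_int (x $ i))"
    by (simp add: inner_vec_def int_vec_to_real_def sum_subtractf sum_distrib_left algebra_simps)
  also have "\<bar>\<dots>\<bar> \<le> (\<Sum>i\<in>UNIV. \<epsilon> * \<bar>real_of_int (x $ i)\<bar>)"
    unfolding abs_minus_cancel
  proof (intro order_trans[OF sum_abs] sum_mono)
    fix i
    show "\<bar>(of_int q * E $ i - of_int (p $ i)) * real_of_int (x $ i)\<bar> \<le> \<epsilon> * \<bar>real_of_int (x $ i)\<bar>"
      using mult_right_mono[OF less_imp_le[OF app[of i]] abs_ge_zero] by (simp add: abs_mult)
  qed
  finally show ?thesis by (simp add: sum_distrib_left)
qed

lemma finite_negative_gap:
  fixes S :: "real set"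
  assumes "finite S"
  shows "\<exists>\<eta>. 0 < \<eta> \<and> \<eta> \<le> 1 \<and> (\<forall>t\<in>S. t < 0 \<longrightarrow> t \<le> - \<eta>)"
proof -
  define \<eta> where "\<eta> = Min (insert 1 (uminus ` {t\<in>S. t < 0}))"
  have "finite (insert 1 (uminus ` {t\<in>S. t < 0}))" using assms by simp
  then have "0 < \<eta>" "\<eta> \<le> 1" "\<forall>t\<in>S. t < 0 \<longrightarrow> \<eta> \<le> - t" by (auto simp: \<eta>_def)
  then show ?thesis by (intro exI[of _ \<eta>]) auto
qed

text \<open>If a nonzero real direction \<open>E\<close> is nonpositive on a finite set \<open>V\<close> of integer vectors, then so is
  some nonzero homomorphism \<open>\<int>\<^sup>d \<rightarrow> \<int>\<close>: take \<open>l x = p \<cdot> x\<close> for a good Dirichlet approximation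
  \<open>p/q\<close> of \<open>E\<close>. The approximation error is smaller than the gap between \<open>0\<close> and the negative
  values of \<open>E\<close> on \<open>V\<close>, and smaller than \<open>1\<close> where \<open>E\<close> vanishes.\<close>
lemma integer_direction:
  fixes E :: "real ^ 'd" and V :: "(int ^ 'd) set"
  assumes fin: "finite V" and E: "E \<noteq> 0" and neg: "\<And>x. x \<in> V \<Longrightarrow> E \<bullet> int_vec_to_real x \<le> 0"
  shows "\<exists>l. (\<forall>x y. l (x + y) = l x + l y) \<and> (\<exists>x. l x \<noteq> (0::int)) \<and> (\<forall>x\<in>V. l x \<le> 0)"
proof -
  obtain i0 where i0: "E $ i0 \<noteq> 0" using E by (auto simp: vec_eq_iff)
  obtain \<eta> where \<eta>: "0 < \<eta>" "\<eta> \<le> 1"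
    and gap: "\<And>x. x \<in> V \<Longrightarrow> E \<bullet> int_vec_to_real x < 0 \<Longrightarrow> E \<bullet> int_vec_to_real x \<le> - \<eta>"
    using finite_negative_gap[of "(\<lambda>x. E \<bullet> int_vec_to_real x) ` V"] fin by auto
  define Mc where "Mc = (\<Sum>x\<in>V. \<Sum>i\<in>UNIV. \<bar>real_of_int (x $ i)\<bar>)"
  have Mc: "(\<Sum>i\<in>UNIV. \<bar>real_of_int (x $ i)\<bar>) \<le> Mc" if "x \<in> V" for x
    unfolding Mc_def using fin that by (intro member_le_sum) (auto intro: sum_nonneg)
  have Mc0: "0 \<le> Mc" unfolding Mc_def by (auto intro: sum_nonneg)
  define \<epsilon> where "\<epsilon> = min (\<eta> / (Mc + 1)) \<bar>E $ i0\<bar>"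
  have \<epsilon>: "0 < \<epsilon>" "\<epsilon> * Mc < \<eta>" "\<epsilon> \<le> \<bar>E $ i0\<bar>"
  proof -
    have "\<eta> / (Mc + 1) * Mc < \<eta>" using \<eta> Mc0 by (simp add: field_simps)
    moreover have "\<epsilon> * Mc \<le> \<eta> / (Mc + 1) * Mc" using Mc0 unfolding \<epsilon>_def by (intro mult_right_mono) auto
    ultimately show "0 < \<epsilon>" "\<epsilon> * Mc < \<eta>" "\<epsilon> \<le> \<bar>E $ i0\<bar>" using \<eta> Mc0 i0 by (auto simp: \<epsilon>_def)
  qed
  obtain q and p :: "int ^ 'd" where q: "q > 0" and app: "\<And>i. \<bar>of_int q * E $ i - of_int (p $ i)\<bar> < \<epsilon>"
    using simultaneous_approximation[OF \<epsilon>(1), of E] by blast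
  define l where "l x = (\<Sum>i\<in>UNIV. p $ i * x $ i)" for x :: "int ^ 'd"
  have add: "l (x + y) = l x + l y" for x y by (simp add: l_def algebra_simps sum.distrib)
  have "l (axis i0 1) = p $ i0" by (simp add: l_def axis_def if_distrib cong: if_cong)
  moreover have "p $ i0 \<noteq> 0"
  proof
    assume "p $ i0 = 0"
    then have "\<bar>of_int q * E $ i0\<bar> < \<bar>E $ i0\<bar>" using app[of i0] \<epsilon>(3) by simp
    moreover have "\<bar>E $ i0\<bar> \<le> \<bar>of_int q * E $ i0\<bar>" using q by (simp add: abs_mult mult_le_cancel_right1)
    ultimately show False by linarith
  qed
  moreover have "l x \<le> 0" if x: "x \<in> V" for x
  proof -
    have "real_of_int (l x) \<le> of_int q * (E \<bullet> int_vec_to_real x) + \<epsilon> * Mc"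
      using dot_approximation[where x = x, OF app] mult_left_mono[OF Mc[OF x] less_imp_le[OF \<epsilon>(1)]]
      unfolding l_def by linarith
    then have "real_of_int (l x) < of_int q * (E \<bullet> int_vec_to_real x) + \<eta>" using \<epsilon>(2) by linarith
    moreover have "of_int q * (E \<bullet> int_vec_to_real x) + \<eta> \<le> 1"
    proof (cases "E \<bullet> int_vec_to_real x < 0")
      case True
      have "real_of_int q * (E \<bullet> int_vec_to_real x) \<le> 1 * (E \<bullet> int_vec_to_real x)"
        using q True by (intro mult_right_mono_neg) auto
      then show ?thesis using gap[OF x True] by linarith
    qed (use neg[OF x] \<eta>(2) in simp)
    ultimately show ?thesis by linarith
  qed
  ultimately have "l (axis i0 1) \<noteq> 0" "\<forall>x\<in>V. l x \<le> 0" by auto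
  then show ?thesis using add by blast
qed

lemma additive_scale:
  fixes l :: "int ^ 'd \<Rightarrow> int"
  assumes add: "\<And>x y. l (x + y) = l x + l y"
  shows "l (c *s x) = c * l x"
  using additive_coordinates[OF add, of "c *s x"] additive_coordinates[OF add, of x]
  by (simp add: vector_scalar_mult_def sum_distrib_left ac_simps)

text \<open>The image of a nonzero homomorphism \<open>l : \<int>\<^sup>d \<rightarrow> \<int>\<close> is \<open>g\<int>\<close> for its least positive value \<open>g\<close>,
  so \<open>l = g \<cdot> L\<close> with \<open>L\<close> onto.\<close>
lemma additive_multiple_of_surj:
  fixes l :: "int ^ 'd \<Rightarrow> int"
  assumes add: "\<And>x y. l (x + y) = l x + l y" and nz: "l x0 \<noteq> 0"
  shows "\<exists>L g. is_surj_hom L \<and> g > 0 \<and> (\<forall>x. l x = g * L x)"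
proof -
  have scale: "l (c *s x) = c * l x" for c x by (rule additive_scale[OF add])
  define P where "P = {k::nat. k > 0 \<and> int k \<in> range l}"
  have "l (sgn (l x0) *s x0) = \<bar>l x0\<bar>" by (simp add: scale abs_sgn mult.commute)
  then have "nat \<bar>l x0\<bar> \<in> P"
    using nz rangeI[of l "sgn (l x0) *s x0"] by (simp add: P_def)
  then have gP: "(LEAST k. k \<in> P) \<in> P" by (rule LeastI)
  define g where "g = (LEAST k. k \<in> P)"
  obtain xg where xg: "l xg = int g" and g0: "g > 0" using gP unfolding P_def g_def by auto
  have dvd: "int g dvd l x" for x
  proof (rule ccontr)
    define r where "r = l x mod int g"
    assume "\<not> int g dvd l x"
    then have "0 < r" "r < int g" using g0 by (simp_all add: r_def dvd_eq_mod_eq_0 order_le_neq_trans)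
    moreover have "r = l (x + (- (l x div int g)) *s xg)"
      unfolding add scale xg r_def by (simp add: minus_div_mult_eq_mod)
    ultimately have "nat r \<in> P" unfolding P_def by (auto intro!: range_eqI)
    then have "g \<le> nat r" unfolding g_def by (rule Least_le)
    then show False using \<open>0 < r\<close> \<open>r < int g\<close> by (simp add: le_nat_iff)
  qed
  define L where "L x = l x div int g" for x
  have "L (x + y) = L x + L y" for x y unfolding L_def add using dvd by (simp add: div_plus_div_distrib_dvd_left)
  moreover have "L (k *s xg) = k" for k unfolding L_def scale xg using g0 by simp
  then have "surj L" unfolding surj_def by metis
  moreover have "l x = int g * L x" for x unfolding L_def using dvd by simp
  ultimately show ?thesis using g0 by (intro exI[of _ L] exI[of _ "int g"]) (auto simp: is_surj_hom_def)
qed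

text \<open>Otherwise \<open>E\<close> is nonpositive on the
  finitely many displacements of short closed walks; an integer \<open>L\<close> with the same property is then
  nonpositive on all closed walks, so the \<open>L\<close>-sums are bounded.\<close>
lemma positive_closed_walk_in_direction:
  fixes A :: "'a::finite \<Rightarrow> 'a \<Rightarrow> bool" and H :: "'a \<Rightarrow> 'a \<Rightarrow> int ^ 'd" and E :: "real ^ 'd"
  assumes unb: "\<forall>L :: int ^ 'd \<Rightarrow> int. is_surj_hom L \<longrightarrow> (\<forall>B. \<exists>s\<in>sft A. \<exists>m. L (hsum H s m) > B)"
    and E: "E \<noteq> 0"
  shows "\<exists>xs. closed_walk A xs \<and> E \<bullet> int_vec_to_real (walk_sum H xs) > 0"
proof (rule ccontr)
  assume "\<not> ?thesis"
  then have nonpos: "E \<bullet> int_vec_to_real (walk_sum H xs) \<le> 0" if "closed_walk A xs" for xs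
    using that by force
  define Short where "Short = {xs. closed_walk A xs \<and> length xs \<le> card (UNIV :: 'a set) + 1}"
  have "finite Short"
    by (rule finite_subset[OF _ finite_lists_length_le[of UNIV "card (UNIV :: 'a set) + 1"]])
      (auto simp: Short_def)
  then have "finite (walk_sum H ` Short)" by blast
  moreover have "E \<bullet> int_vec_to_real x \<le> 0" if "x \<in> walk_sum H ` Short" for x
    using that nonpos by (auto simp: Short_def)
  ultimately have "\<exists>l. (\<forall>x y. l (x + y) = l x + l y) \<and> (\<exists>x. l x \<noteq> (0::int))
      \<and> (\<forall>x\<in>walk_sum H ` Short. l x \<le> 0)"
    by (rule integer_direction[OF _ E])
  then obtain l x0 where l: "\<And>x y. l (x + y) = l x + l y" "l x0 \<noteq> 0"
      "\<And>x. x \<in> walk_sum H ` Short \<Longrightarrow> l x \<le> (0::int)"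
    by blast
  obtain L g where L: "is_surj_hom L" "g > 0" "\<And>x. l x = g * L x"
    using additive_multiple_of_surj[OF l(1) l(2)] by blast
  have add: "\<And>x y. L (x + y) = L x + L y" using L(1) by (simp add: is_surj_hom_def)
  have short: "walk_sum (\<lambda>a b. L (H a b)) ys \<le> 0"
    if "closed_walk A ys" "length ys \<le> card (UNIV :: 'a set) + 1" for ys
  proof -
    have "g * L (walk_sum H ys) \<le> 0" using l(3)[of "walk_sum H ys"] L(3) that by (auto simp: Short_def)
    then have "L (walk_sum H ys) \<le> 0" using L(2) by (simp add: mult_le_0_iff)
    then show ?thesis using walk_sum_hom[of L H ys] additive_zero[OF add] add by simp
  qed
  obtain M where M: "\<And>a b. \<bar>L (H a b)\<bar> \<le> M"
    using finite_weight_bound[of "\<lambda>a b. L (H a b)"] by blast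
  have "\<forall>B. \<exists>s\<in>sft A. \<exists>m. L (hsum H s m) > B" using unb L(1) by blast
  then obtain s m where s: "s \<in> sft A" and big: "L (hsum H s m) > int (card (UNIV :: 'a set)) * M"
    by blast
  obtain xs where "closed_walk A xs" "walk_sum (\<lambda>a b. L (H a b)) xs > 0"
    using positive_closed_walk_of_large_sum[where H = H, OF add M s big] by blast
  then show False using closed_walk_sum_nonpos[OF short] by fastforce
qed

lemma trancl_path:
  "(a, b) \<in> {(x, y). A x y}\<^sup>+ \<Longrightarrow> \<exists>ps. successively A ps \<and> hd ps = a \<and> last ps = b \<and> ps \<noteq> []"
proof (induction rule: trancl_induct)
  case (base y)
  then show ?case by (intro exI[of _ "[a, y]"]) auto
next
  case (step y z)
  then obtain ps where ps: "successively A ps" "hd ps = a" "last ps = y" "ps \<noteq> []" by blast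
  then have "successively A (ps @ [z])" using step(2) by (auto simp: successively_append_iff)
  then show ?case using ps by (intro exI[of _ "ps @ [z]"]) auto
qed

primrec walk_power :: "'a list \<Rightarrow> nat \<Rightarrow> 'a list" where
  "walk_power c 0 = [hd c]"
| "walk_power c (Suc k) = walk_power c k @ tl c"

lemma walk_power:
  fixes g :: "'a \<Rightarrow> 'a \<Rightarrow> real"
  assumes c: "closed_walk A c"
  shows "walk_power c k \<noteq> [] \<and> hd (walk_power c k) = hd c \<and> last (walk_power c k) = hd c
         \<and> successively A (walk_power c k) \<and> walk_sum g (walk_power c k) = real k * walk_sum g c"
proof (induction k)
  case (Suc k)
  have "c \<noteq> []" "last c = hd c" "successively A c" using c by (auto simp: closed_walk_def)
  then have "walk_sum g (walk_power c (Suc k)) = walk_sum g (walk_power c k) + walk_sum g c"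
    "successively A (walk_power c (Suc k))" "last (walk_power c (Suc k)) = hd c"
    using walk_join[of "walk_power c k" c] walk_join(1)[of "walk_power c k" c g] Suc by auto
  then show ?case using Suc by (simp add: algebra_simps)
qed simp

text \<open>In a transitive shift, a closed walk of positive weight can be moved to any base state
  \<open>q\<^sub>0\<close>: go from \<open>q\<^sub>0\<close> to the walk, traverse it often enough, and come back.\<close>
lemma positive_closed_walk_at:
  fixes g :: "'a \<Rightarrow> 'a \<Rightarrow> real"
  assumes tr: "sft_transitive A" and c: "closed_walk A c" and pos: "walk_sum g c > 0"
  shows "\<exists>ys. closed_walk A ys \<and> hd ys = q0 \<and> walk_sum g ys > 0"
proof -
  obtain P where P: "successively A P" "hd P = q0" "last P = hd c" "P \<noteq> []"
    using trancl_path[of q0 "hd c" A] tr unfolding sft_transitive_def by blast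
  obtain Q where Q: "successively A Q" "hd Q = hd c" "last Q = q0" "Q \<noteq> []"
    using trancl_path[of "hd c" q0 A] tr unfolding sft_transitive_def by blast
  obtain k :: nat where k: "real k > (\<bar>walk_sum g P\<bar> + \<bar>walk_sum g Q\<bar>) / walk_sum g c"
    using reals_Archimedean2 by blast
  then have kc: "real k * walk_sum g c > \<bar>walk_sum g P\<bar> + \<bar>walk_sum g Q\<bar>"
    using pos by (simp add: field_simps)
  define R where "R = walk_power c k"
  have R: "R \<noteq> []" "hd R = hd c" "last R = hd c" "successively A R" "walk_sum g R = real k * walk_sum g c"
    using walk_power[OF c, of k g] unfolding R_def by auto
  define Y1 where "Y1 = P @ tl R"
  have Y1: "Y1 \<noteq> []" "hd Y1 = q0" "last Y1 = hd Q" "successively A Y1"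
    "walk_sum g Y1 = walk_sum g P + real k * walk_sum g c"
    using walk_join[of P R] walk_join(1)[of P R g] P R Q(2) unfolding Y1_def by auto
  define Y where "Y = Y1 @ tl Q"
  have "hd Y = q0" "last Y = q0" "successively A Y"
    and wY: "walk_sum g Y = walk_sum g P + real k * walk_sum g c + walk_sum g Q"
    using walk_join[of Y1 Q] walk_join(1)[of Y1 Q g] Y1 Q unfolding Y_def by auto
  moreover have "length Y \<ge> 2"
  proof (rule ccontr)
    assume "\<not> length Y \<ge> 2"
    then have "walk_sum g Y = 0" by (simp add: walk_sum_conv_sum)
    then show False using wY kc by linarith
  qed
  ultimately show ?thesis using kc unfolding closed_walk_def by (intro exI[of _ Y]) auto
qed

section \<open>Uniformity by compactness\<close>

text \<open>Compactness of the unit sphere: if every unit direction \<open>E\<close> sees some \<open>y \<in> P\<close> with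
  \<open>E \<bullet> S y > 0\<close>, then finitely many \<open>y\<close> suffice, uniformly with margin \<open>\<delta> \<cdot> len y\<close>.\<close>
lemma uniform_directions:
  fixes S :: "'l \<Rightarrow> 'v::euclidean_space" and len :: "'l \<Rightarrow> nat"
  assumes cov: "\<And>E. norm E = 1 \<Longrightarrow> \<exists>y\<in>P. E \<bullet> S y > 0" and len: "\<And>y. y \<in> P \<Longrightarrow> len y \<ge> 1"
  shows "\<exists>F \<delta>. finite F \<and> F \<subseteq> P \<and> F \<noteq> {} \<and> \<delta> > 0
           \<and> (\<forall>E. norm E = 1 \<longrightarrow> (\<exists>y\<in>F. E \<bullet> S y \<ge> \<delta> * real (len y)))"
proof -
  define y where "y E = (SOME y. y \<in> P \<and> E \<bullet> S y > 0)" for E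
  have y: "y E \<in> P" "E \<bullet> S (y E) > 0" if "norm E = 1" for E
  proof -
    have "\<exists>y. y \<in> P \<and> E \<bullet> S y > 0" using cov[OF that] by blast
    from someI_ex[OF this] show "y E \<in> P" "E \<bullet> S (y E) > 0" unfolding y_def by blast+
  qed
  define d where "d E = E \<bullet> S (y E) / (2 * real (len (y E)))" for E
  have d: "d E > 0" "2 * (d E * real (len (y E))) = E \<bullet> S (y E)" if "norm E = 1" for E
    using y[OF that] len[of "y E"] unfolding d_def by auto
  define U where "U E = {x. S (y E) \<bullet> x > d E * real (len (y E))}" for E
  have "open (U E)" for E unfolding U_def by (rule open_halfspace_gt)
  moreover have "sphere 0 1 \<subseteq> (\<Union>E\<in>sphere 0 1. U E)"
  proof
    fix E :: 'v assume "E \<in> sphere 0 1"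
    then have "norm E = 1" by simp
    then have "E \<in> U E" using d[of E] len[of "y E"] y[of E] by (auto simp: U_def inner_commute)
    then show "E \<in> (\<Union>E\<in>sphere 0 1. U E)" using \<open>E \<in> sphere 0 1\<close> by blast
  qed
  ultimately obtain T where T: "T \<subseteq> sphere 0 1" "finite T" "sphere 0 1 \<subseteq> (\<Union>E\<in>T. U E)"
    using compactE_image[OF compact_sphere] by metis
  obtain b :: 'v where "b \<in> Basis" using nonempty_Basis by blast
  then have "b \<in> sphere 0 1" by simp
  then have "T \<noteq> {}" using T(3) by blast
  define \<delta> where "\<delta> = Min (d ` T)"
  have "\<delta> > 0" unfolding \<delta>_def using T d \<open>T \<noteq> {}\<close> by (subst Min_gr_iff) auto
  moreover have "\<exists>y'\<in>y ` T. E \<bullet> S y' \<ge> \<delta> * real (len y')" if "norm E = 1" for E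
  proof -
    have "E \<in> sphere 0 1" using that by simp
    then obtain E0 where E0: "E0 \<in> T" "E \<in> U E0" using T(3) by blast
    have "\<delta> * real (len (y E0)) \<le> d E0 * real (len (y E0))"
      unfolding \<delta>_def using E0(1) T(2) by (intro mult_right_mono) auto
    then show ?thesis using E0 by (intro bexI[of _ "y E0"]) (auto simp: U_def inner_commute)
  qed
  moreover have "y ` T \<subseteq> P" using T(1) y by auto
  ultimately show ?thesis using T(2) \<open>T \<noteq> {}\<close> by (intro exI[of _ "y ` T"] exI[of _ \<delta>]) auto
qed

lemma balanced_displacements:
  fixes S :: "'l \<Rightarrow> 'v::real_inner" and len :: "'l \<Rightarrow> nat"
  assumes unif: "\<And>E. norm E = 1 \<Longrightarrow> \<exists>y\<in>F. E \<bullet> S y \<ge> \<delta> * real (len y)"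
    and F: "F \<noteq> {}" and v: "norm v < \<delta>"
  shows "\<exists>y\<in>F. e \<bullet> (S y - real (len y) *\<^sub>R v) \<le> 0"
proof (cases "e = 0")
  case False
  define u where "u = - ((1 / norm e) *\<^sub>R e)"
  have "norm u = 1" using False by (simp add: u_def)
  then obtain y where y: "y \<in> F" "u \<bullet> S y \<ge> \<delta> * real (len y)" using unif by blast
  have "e = - (norm e *\<^sub>R u)" using False by (simp add: u_def)
  then have "e \<bullet> S y = - (norm e * (u \<bullet> S y))" by (metis inner_minus_left inner_scaleR_left)
  also have "\<dots> \<le> - (norm e * (\<delta> * real (len y)))" using y(2) by (simp add: mult_left_mono)
  also have "\<dots> \<le> real (len y) * (e \<bullet> v)"
  proof -
    have "- (e \<bullet> v) \<le> norm e * norm v" using Cauchy_Schwarz_ineq2[of e v] by linarith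
    also have "\<dots> \<le> norm e * \<delta>" using v by (simp add: mult_left_mono)
    finally have "- (e \<bullet> v) * real (len y) \<le> norm e * \<delta> * real (len y)"
      by (rule mult_right_mono) simp
    then show ?thesis by (simp add: algebra_simps)
  qed
  finally show ?thesis using y(1) by (intro bexI[of _ y]) (simp_all add: inner_diff_right)
qed (use F in auto)

section \<open>Realising a rotation vector by concatenating loops\<close>

text \<open>Greedy choice: adding at each step a vector \<open>z (pick e)\<close> that points against the current
  sum \<open>e\<close> keeps the sum of order \<open>\<surd>t\<close>.\<close>
primrec greedy_sum :: "('l \<Rightarrow> 'v::real_inner) \<Rightarrow> ('v \<Rightarrow> 'l) \<Rightarrow> nat \<Rightarrow> 'v" where
  "greedy_sum z pick 0 = 0"
| "greedy_sum z pick (Suc t) = greedy_sum z pick t + z (pick (greedy_sum z pick t))"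

lemma norm_greedy_sum:
  assumes against: "\<And>e. e \<bullet> z (pick e) \<le> 0" and K: "\<And>e. norm (z (pick e)) ^ 2 \<le> K"
  shows "norm (greedy_sum z pick t) ^ 2 \<le> K * real t"
proof (induction t)
  case (Suc t)
  let ?e = "greedy_sum z pick t"
  have "norm (?e + z (pick ?e)) ^ 2 = norm ?e ^ 2 + 2 * (?e \<bullet> z (pick ?e)) + norm (z (pick ?e)) ^ 2"
    by (simp add: power2_norm_eq_inner inner_add algebra_simps inner_commute)
  also have "\<dots> \<le> K * real t + K" using Suc against[of ?e] K[of ?e] by linarith
  finally show ?case by (simp add: algebra_simps)
qed simp

text \<open>Position of step \<open>n\<close> of an infinite concatenation of blocks of lengths \<open>len t \<ge> 1\<close>:
  the block index and the offset inside the block.\<close>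
primrec block_pos :: "(nat \<Rightarrow> nat) \<Rightarrow> nat \<Rightarrow> nat \<times> nat" where
  "block_pos len 0 = (0, 0)"
| "block_pos len (Suc n) =
     (if Suc (snd (block_pos len n)) < len (fst (block_pos len n))
      then (fst (block_pos len n), Suc (snd (block_pos len n)))
      else (Suc (fst (block_pos len n)), 0))"

lemma block_pos:
  assumes "\<And>t. len t \<ge> 1"
  shows "snd (block_pos len n) < len (fst (block_pos len n))"
    and "n = (\<Sum>u<fst (block_pos len n). len u) + snd (block_pos len n)"
proof -
  have "snd (block_pos len n) < len (fst (block_pos len n))
        \<and> n = (\<Sum>u<fst (block_pos len n). len u) + snd (block_pos len n)"
  proof (induction n)
    case 0
    show ?case using assms[of 0] by simp
  next
    case (Suc n)
    then show ?case using assms[of "Suc (fst (block_pos len n))"] by auto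
  qed
  then show "snd (block_pos len n) < len (fst (block_pos len n))"
    and "n = (\<Sum>u<fst (block_pos len n). len u) + snd (block_pos len n)" by blast+
qed

lemma block_pos_fst_le:
  assumes "\<And>t. len t \<ge> 1"
  shows "fst (block_pos len n) \<le> n"
proof -
  have "fst (block_pos len n) = (\<Sum>u<fst (block_pos len n). 1)" by simp
  also have "\<dots> \<le> (\<Sum>u<fst (block_pos len n). len u)" by (intro sum_mono assms)
  also have "\<dots> \<le> n" using block_pos(2)[of len n, OF assms] by linarith
  finally show ?thesis .
qed

text \<open>The one-sided sequence obtained by running through the closed walks \<open>J 0, J 1, \<dots>\<close>
  (all based at the same state) one after the other.\<close>
definition loop_pos :: "(nat \<Rightarrow> 'a list) \<Rightarrow> nat \<Rightarrow> nat \<times> nat" where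
  "loop_pos J = block_pos (\<lambda>t. length (J t) - 1)"

definition loop_concat :: "(nat \<Rightarrow> 'a list) \<Rightarrow> nat \<Rightarrow> 'a" where
  "loop_concat J n = J (fst (loop_pos J n)) ! snd (loop_pos J n)"

text \<open>Consecutive entries of the concatenation are consecutive entries of the current loop (the end
  of a loop being the start of the next one).\<close>
lemma loop_concat_step:
  assumes J: "\<And>t. closed_walk A (J t)" "\<And>t. hd (J t) = q0"
  shows "loop_concat J n = J (fst (loop_pos J n)) ! snd (loop_pos J n)"
    and "loop_concat J (Suc n) = J (fst (loop_pos J n)) ! Suc (snd (loop_pos J n))"
proof -
  obtain t r where tr: "loop_pos J n = (t, r)" by (cases "loop_pos J n")
  have len: "length (J t') - 1 \<ge> 1" for t' using closed_walkD(2)[OF J(1)] .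
  have r: "r < length (J t) - 1" using block_pos(1)[of "\<lambda>t. length (J t) - 1" n, OF len] tr by (simp add: loop_pos_def)
  have start: "J t' ! 0 = q0" for t' using closed_walkD(4)[OF J(1)] J(2) by simp
  show "loop_concat J n = J (fst (loop_pos J n)) ! snd (loop_pos J n)" by (simp add: loop_concat_def loop_pos_def)
  show "loop_concat J (Suc n) = J (fst (loop_pos J n)) ! Suc (snd (loop_pos J n))"
  proof (cases "Suc r < length (J t) - 1")
    case False
    then have "Suc r = length (J t) - 1" using r by simp
    then have "J t ! Suc r = q0" using closed_walkD(5)[OF J(1)] J(2) by simp
    then show ?thesis using False tr start by (simp add: loop_concat_def loop_pos_def)
  qed (use tr in \<open>simp add: loop_concat_def loop_pos_def\<close>)
qed

lemma loop_concat_walk: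
  assumes J: "\<And>t. closed_walk A (J t)" "\<And>t. hd (J t) = q0"
  shows "loop_concat J 0 = q0" and "A (loop_concat J n) (loop_concat J (Suc n))"
proof -
  show "loop_concat J 0 = q0" using closed_walkD(4)[OF J(1)] J(2) by (simp add: loop_concat_def loop_pos_def)
  define t r where "t = fst (loop_pos J n)" and "r = snd (loop_pos J n)"
  have len: "length (J t') - 1 \<ge> 1" for t' using closed_walkD(2)[OF J(1)] .
  have "Suc r < length (J t)"
    using block_pos(1)[of "\<lambda>t. length (J t) - 1" n, OF len] by (simp add: t_def r_def loop_pos_def)
  then have "A (J t ! r) (J t ! Suc r)" using closed_walkD(3)[OF J(1)] by (simp add: successively_nth)
  then show "A (loop_concat J n) (loop_concat J (Suc n))"
    using loop_concat_step[where n = n, OF J(1) J(2)] by (simp add: t_def r_def)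
qed

lemma walk_sum_take_Suc:
  assumes "Suc r < length w"
  shows "walk_sum g (take (Suc (Suc r)) w) = walk_sum g (take (Suc r) w) + g (w ! r) (w ! Suc r)"
proof -
  have "take (Suc (Suc r)) w = take r w @ w ! r # [w ! Suc r]" "take (Suc r) w = take r w @ [w ! r]"
    using assms by (simp_all add: take_Suc_conv_app_nth)
  then show ?thesis using walk_sum_append[of g "take r w" "w ! r" "[w ! Suc r]"] by simp
qed

lemma loop_concat_sum:
  assumes J: "\<And>t. closed_walk A (J t)" "\<And>t. hd (J t) = q0"
  shows "(\<Sum>i<n. g (loop_concat J i) (loop_concat J (Suc i)))
           = (\<Sum>u<fst (loop_pos J n). walk_sum g (J u))
             + walk_sum g (take (Suc (snd (loop_pos J n))) (J (fst (loop_pos J n))))"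
proof (induction n)
  case 0
  show ?case using closed_walkD(1)[OF J(1), of 0] by (cases "J 0") (auto simp: loop_pos_def)
next
  case (Suc n)
  obtain t r where tr: "loop_pos J n = (t, r)" by (cases "loop_pos J n")
  have len: "length (J t') - 1 \<ge> 1" for t' using closed_walkD(2)[OF J(1)] .
  have r: "r < length (J t) - 1" using block_pos(1)[of "\<lambda>t. length (J t) - 1" n, OF len] tr by (simp add: loop_pos_def)
  have step: "(\<Sum>i<Suc n. g (loop_concat J i) (loop_concat J (Suc i)))
      = (\<Sum>u<t. walk_sum g (J u)) + walk_sum g (take (Suc (Suc r)) (J t))"
    using Suc.IH loop_concat_step[where n = n, OF J(1) J(2)] walk_sum_take_Suc[of r "J t" g] r
    by (simp add: tr add.assoc)
  show ?case
  proof (cases "Suc r < length (J t) - 1")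
    case True
    then show ?thesis using step tr by (simp add: loop_pos_def)
  next
    case False
    then have "take (Suc (Suc r)) (J t) = J t" using r by simp
    moreover have "walk_sum g (take (Suc 0) (J (Suc t))) = 0" by (cases "J (Suc t)") auto
    ultimately show ?thesis using step tr False by (simp add: loop_pos_def)
  qed
qed

definition extend_to_point :: "'a list \<Rightarrow> (nat \<Rightarrow> 'a) \<Rightarrow> int \<Rightarrow> 'a" where
  "extend_to_point c p i = (if 0 \<le> i then p (nat i) else periodic_extension c i)"

lemma extend_to_point_in_sft:
  assumes c: "closed_walk A c" and p0: "p 0 = hd c" and walk: "\<And>n. A (p n) (p (Suc n))"
  shows "extend_to_point c p \<in> sft A"
  unfolding sft_def
proof (intro CollectI allI)
  fix i :: int
  have per: "A (periodic_extension c i) (periodic_extension c (i + 1))"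
    using periodic_extension_in_sft[OF c] by (simp add: sft_def)
  have "periodic_extension c 0 = hd c"
    using periodic_extension_nth[OF c, of 0] closed_walkD(4)[OF c] by simp
  then show "A (extend_to_point c p i) (extend_to_point c p (i + 1))"
    using walk[of "nat i"] per p0 by (cases "0 \<le> i"; cases "i = -1") (auto simp: extend_to_point_def nat_add_distrib)
qed

lemma hsum_extend_to_point:
  "hsum H (extend_to_point c p) n = (\<Sum>i<n. H (p i) (p (Suc i)))"
  unfolding hsum_conv_sum extend_to_point_def by (simp add: nat_add_distrib)

text \<open>If each loop \<open>J t\<close> is taken from a finite set and the accumulated displacement errors
  \<open>\<Sum>\<^sub>u\<^sub><\<^sub>t z(J u)\<close> relative to \<open>v\<close> are \<open>O(\<surd>t)\<close>, then the partial sums of the concatenation deviate from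
  \<open>n \<cdot> v\<close> by \<open>O(\<surd>n)\<close>: the current incomplete loop only adds a bounded error.\<close>
lemma loop_concat_deviation:
  fixes A :: "'a::finite \<Rightarrow> 'a \<Rightarrow> bool" and g :: "'a \<Rightarrow> 'a \<Rightarrow> 'v::real_normed_vector"
  assumes fin: "finite F" and JF: "\<And>t. J t \<in> F"
    and loops: "\<And>ys. ys \<in> F \<Longrightarrow> closed_walk A ys \<and> hd ys = q0" and K: "K \<ge> 0"
    and small: "\<And>t. norm (\<Sum>u<t. walk_sum g (J u) - real (length (J u) - 1) *\<^sub>R v) \<le> sqrt (K * real t)"
  shows "\<exists>B. \<forall>n. norm ((\<Sum>i<n. g (loop_concat J i) (loop_concat J (Suc i))) - real n *\<^sub>R v)
                 \<le> sqrt (K * real n) + B"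
proof -
  have J: "closed_walk A (J t)" "hd (J t) = q0" for t using loops[OF JF] by auto
  obtain Mg where Mg: "\<And>a b. \<bar>norm (g a b)\<bar> \<le> Mg" using finite_weight_bound[of "\<lambda>a b. norm (g a b)"] by blast
  define Lm where "Lm = (\<Sum>ys\<in>F. length ys)"
  have "length (J t) \<le> Lm" for t unfolding Lm_def using JF fin by (intro member_le_sum) auto
  define B where "B = real Lm * (Mg + norm v)"
  have "norm ((\<Sum>i<n. g (loop_concat J i) (loop_concat J (Suc i))) - real n *\<^sub>R v) \<le> sqrt (K * real n) + B" for n
  proof -
    obtain t r where tr: "loop_pos J n = (t, r)" by (cases "loop_pos J n")
    have len: "length (J t') - 1 \<ge> 1" for t' using closed_walkD(2)[OF J(1)] .
    have r: "r < length (J t) - 1" and n: "n = (\<Sum>u<t. length (J u) - 1) + r"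
      using block_pos[of "\<lambda>t. length (J t) - 1" n, OF len] tr by (simp_all add: loop_pos_def)
    have tn: "t \<le> n"
      using block_pos_fst_le[of "\<lambda>t. length (J t) - 1" n, OF len] tr by (simp add: loop_pos_def)
    define R where "R = walk_sum g (take (Suc r) (J t)) - real (length (take (Suc r) (J t)) - 1) *\<^sub>R v"
    have "(\<Sum>i<n. g (loop_concat J i) (loop_concat J (Suc i)))
        = (\<Sum>u<t. walk_sum g (J u)) + walk_sum g (take (Suc r) (J t))"
      using loop_concat_sum[where n = n and g = g, OF J(1) J(2)] tr by simp
    moreover have "real n = (\<Sum>u<t. real (length (J u) - 1)) + real r" using n by simp
    moreover have "length (take (Suc r) (J t)) - 1 = r" using r by simp
    ultimately have dev: "(\<Sum>i<n. g (loop_concat J i) (loop_concat J (Suc i))) - real n *\<^sub>R v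
        = (\<Sum>u<t. walk_sum g (J u) - real (length (J u) - 1) *\<^sub>R v) + R"
      by (simp add: R_def sum_subtractf scaleR_add_left scaleR_sum_left algebra_simps)
    have loops_bound: "norm (\<Sum>u<t. walk_sum g (J u) - real (length (J u) - 1) *\<^sub>R v) \<le> sqrt (K * real n)"
    proof -
      have "K * real t \<le> K * real n" using tn K by (simp add: mult_left_mono)
      then show ?thesis using small[of t] real_sqrt_le_mono order_trans by blast
    qed
    have "norm R \<le> real r * (Mg + norm v)"
      unfolding R_def using norm_walk_deviation_le[of g Mg "take (Suc r) (J t)" v] Mg r by simp
    also have "\<dots> \<le> B"
      unfolding B_def using r \<open>length (J t) \<le> Lm\<close> norm_ge_zero[of "g q0 q0"] norm_ge_zero[of v] Mg[of q0 q0]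
      by (intro mult_right_mono) (simp, linarith)
    finally have "norm R \<le> B" .
    moreover note norm_triangle_ineq[of "\<Sum>u<t. walk_sum g (J u) - real (length (J u) - 1) *\<^sub>R v" R]
    ultimately show ?thesis unfolding dev using loops_bound by linarith
  qed
  then show ?thesis by blast
qed

text \<open>Suppose finitely many loops at \<open>q\<^sub>0\<close> are balanced around \<open>v\<close>: in every
  direction \<open>e\<close>, the displacement of one of them, relative to \<open>v\<close> per step, points against \<open>e\<close>. Then
  \<open>v\<close> is a rotation vector: append at each stage the loop pointing against the accumulated error.\<close>
lemma rotation_of_balanced_loops:
  fixes A :: "'a::finite \<Rightarrow> 'a \<Rightarrow> bool" and H :: "'a \<Rightarrow> 'a \<Rightarrow> int ^ 'd" and v :: "real ^ 'd"
  assumes fin: "finite F" and loops: "\<And>ys. ys \<in> F \<Longrightarrow> closed_walk A ys \<and> hd ys = q0"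
    and bal: "\<And>e. \<exists>ys\<in>F. e \<bullet> (int_vec_to_real (walk_sum H ys) - real (length ys - 1) *\<^sub>R v) \<le> 0"
  shows "\<exists>s\<in>sft A. has_rot H s v"
proof -
  define Hr where "Hr a b = int_vec_to_real (H a b)" for a b
  have Hr: "walk_sum Hr ys = int_vec_to_real (walk_sum H ys)" for ys
    unfolding Hr_def by (rule walk_sum_hom[OF int_vec_to_real_add int_vec_to_real_zero])
  define z where "z ys = walk_sum Hr ys - real (length ys - 1) *\<^sub>R v" for ys
  define pick where "pick e = (SOME ys. ys \<in> F \<and> e \<bullet> z ys \<le> 0)" for e
  have pick: "pick e \<in> F" "e \<bullet> z (pick e) \<le> 0" for e
  proof -
    have "\<exists>ys. ys \<in> F \<and> e \<bullet> z ys \<le> 0" using bal[of e] by (auto simp: z_def Hr)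
    from someI_ex[OF this] show "pick e \<in> F" "e \<bullet> z (pick e) \<le> 0" unfolding pick_def by blast+
  qed
  define K where "K = (\<Sum>ys\<in>F. norm (z ys) ^ 2)"
  have K: "norm (z (pick e)) ^ 2 \<le> K" for e
    unfolding K_def using pick(1) fin by (intro member_le_sum) auto
  have K0: "K \<ge> 0" unfolding K_def by (intro sum_nonneg) simp
  define J where "J t = pick (greedy_sum z pick t)" for t
  have JF: "J t \<in> F" for t using pick(1) by (simp add: J_def)
  have "greedy_sum z pick t = (\<Sum>u<t. z (J u))" for t by (induction t) (simp_all add: J_def)
  then have "norm (\<Sum>u<t. walk_sum Hr (J u) - real (length (J u) - 1) *\<^sub>R v) \<le> sqrt (K * real t)" for t
    using norm_greedy_sum[of z pick K t, OF pick(2) K] by (simp add: z_def real_le_rsqrt)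
  then obtain B where B: "\<And>n. norm ((\<Sum>i<n. Hr (loop_concat J i) (loop_concat J (Suc i))) - real n *\<^sub>R v)
      \<le> sqrt (K * real n) + B"
    using loop_concat_deviation[where J = J and g = Hr and v = v, OF fin JF loops K0] by blast
  have J: "closed_walk A (J t)" "hd (J t) = q0" for t using loops[OF JF] by auto
  define s where "s = extend_to_point (J 0) (loop_concat J)"
  have "s \<in> sft A"
    unfolding s_def using loop_concat_walk[OF J] J(2) by (intro extend_to_point_in_sft[OF J(1)]) auto
  moreover have "int_vec_to_real (hsum H s n) = (\<Sum>i<n. Hr (loop_concat J i) (loop_concat J (Suc i)))" for n
    unfolding s_def hsum_extend_to_point int_vec_to_real_sum Hr_def ..
  then have "has_rot H s v" unfolding has_rot_def using B by (intro tendsto_average_if_sqrt_deviation[OF K0]) simp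
  ultimately show ?thesis by blast
qed

section \<open>Unbounded Birkhoff sums force \<open>0\<close> into the interior of the rotation set\<close>

text \<open>With an arbitrary base state \<open>q\<^sub>0\<close>: positive closed walks at \<open>q\<^sub>0\<close> exist in every direction,
  finitely many of them do so uniformly, and they are balanced around every \<open>v\<close> in a small ball.\<close>
theorem zero_in_interior_of_unbounded:
  fixes A :: "'a::finite \<Rightarrow> 'a \<Rightarrow> bool" and H :: "'a \<Rightarrow> 'a \<Rightarrow> int ^ 'd"
  assumes tr: "sft_transitive A"
    and unb: "\<forall>L :: int ^ 'd \<Rightarrow> int. is_surj_hom L \<longrightarrow> (\<forall>B. \<exists>s\<in>sft A. \<exists>m. L (hsum H s m) > B)"
  shows "(0 :: real ^ 'd) \<in> interior (rot_set A H)"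
proof -
  fix q0 :: 'a
  define S where "S ys = int_vec_to_real (walk_sum H ys)" for ys
  define P where "P = {ys. closed_walk A ys \<and> hd ys = q0}"
  have proj: "walk_sum (\<lambda>a b. E \<bullet> int_vec_to_real (H a b)) ys = E \<bullet> S ys" for E ys
    unfolding S_def
    by (rule walk_sum_hom) (simp_all add: int_vec_to_real_add int_vec_to_real_zero inner_add_right)
  have "\<exists>y\<in>P. E \<bullet> S y > 0" if "norm E = 1" for E
  proof -
    have "E \<noteq> 0" using that by auto
    then obtain xs where "closed_walk A xs" "E \<bullet> S xs > 0"
      using positive_closed_walk_in_direction[OF unb] unfolding S_def by blast
    then show ?thesis
      using positive_closed_walk_at[OF tr, of xs "\<lambda>a b. E \<bullet> int_vec_to_real (H a b)" q0]
      unfolding proj P_def by blast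
  qed
  moreover have "length ys - 1 \<ge> 1" if "ys \<in> P" for ys using that closed_walkD(2) by (auto simp: P_def)
  ultimately obtain F \<delta> where F: "finite F" "F \<subseteq> P" "F \<noteq> {}" "\<delta> > 0"
      and unif: "\<And>E. norm E = 1 \<Longrightarrow> \<exists>y\<in>F. E \<bullet> S y \<ge> \<delta> * real (length y - 1)"
    using uniform_directions[of P S "\<lambda>ys. length ys - 1"] by blast
  have "v \<in> rot_set A H" if "v \<in> ball 0 \<delta>" for v
  proof -
    have "\<exists>ys\<in>F. e \<bullet> (S ys - real (length ys - 1) *\<^sub>R v) \<le> 0" for e
      using balanced_displacements[OF unif F(3)] that by simp
    moreover have "closed_walk A ys \<and> hd ys = q0" if "ys \<in> F" for ys using that F(2) by (auto simp: P_def)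
    ultimately show ?thesis
      using rotation_of_balanced_loops[OF F(1)] unfolding S_def rot_set_def by blast
  qed
  then show ?thesis using F(4) unfolding mem_interior by blast
qed

theorem mainTheorem8:
  fixes A :: "'a::finite \<Rightarrow> 'a \<Rightarrow> bool"
    and H :: "'a \<Rightarrow> 'a \<Rightarrow> int ^ 'd"
  assumes trans: "sft_transitive A"
  shows "(\<forall>L :: int ^ 'd \<Rightarrow> int. is_surj_hom L \<longrightarrow>
           (\<exists>C :: real. C > 0 \<and>
              ((\<exists>s \<in> sft A. \<exists>n > 0. real_of_int (L (hsum H s n)) > C) \<longrightarrow>
                 (\<exists>s' \<in> sft A. \<exists>n'. periodic_pt s' n' \<and>
                    (\<exists>v. has_rot H s' v \<and> lin_ext L v > 0))) \<and>
              ((\<exists>s \<in> sft A. \<exists>n > 0. real_of_int (L (hsum H s n)) < - C) \<longrightarrow>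
                 (\<exists>s'' \<in> sft A. \<exists>v. has_rot H s'' v \<and> lin_ext L v < 0))))
       \<and> ((0 :: real ^ 'd) \<in> interior (rot_set A H) \<longleftrightarrow>
          (\<forall>L :: int ^ 'd \<Rightarrow> int. is_surj_hom L \<longrightarrow>
             (\<forall>B. \<exists>s \<in> sft A. \<exists>m. L (hsum H s m) > B)))"
proof (intro conjI allI impI iffI)
  fix L :: "int ^ 'd \<Rightarrow> int"
  assume "is_surj_hom L"
  then show "\<exists>C :: real. C > 0 \<and>
      ((\<exists>s \<in> sft A. \<exists>n > 0. real_of_int (L (hsum H s n)) > C) \<longrightarrow>
         (\<exists>s' \<in> sft A. \<exists>n'. periodic_pt s' n' \<and> (\<exists>v. has_rot H s' v \<and> lin_ext L v > 0))) \<and>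
      ((\<exists>s \<in> sft A. \<exists>n > 0. real_of_int (L (hsum H s n)) < - C) \<longrightarrow>
         (\<exists>s'' \<in> sft A. \<exists>v. has_rot H s'' v \<and> lin_ext L v < 0))"
    by (intro rotation_sign_of_large_sums) (simp add: is_surj_hom_def)
next
  fix L :: "int ^ 'd \<Rightarrow> int" and B :: int
  assume "(0 :: real ^ 'd) \<in> interior (rot_set A H)" and "is_surj_hom L"
  then show "\<exists>s \<in> sft A. \<exists>m. L (hsum H s m) > B" by (rule unbounded_of_zero_in_interior)
next
  assume "\<forall>L :: int ^ 'd \<Rightarrow> int. is_surj_hom L \<longrightarrow> (\<forall>B. \<exists>s \<in> sft A. \<exists>m. L (hsum H s m) > B)"
  then show "(0 :: real ^ 'd) \<in> interior (rot_set A H)" by (rule zero_in_interior_of_unbounded[OF trans])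
qed

end
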